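(* Fix an RWA-P instance and weights $\alpha,\beta>0$ (setting as in the context). For an integer $k$, let $f_\alpha^{\max}(k)=\max\{f_\alpha(x,y): (x,y)\text{ feasible},\ f_\beta(x)=k\}$ and $f_\alpha^{\min}(k)=\min\{f_\alpha(x,y): (x,y)\text{ feasible},\ f_\beta(x)=k\}$. Define $$\Omega^{>}=\max\left\{\frac{f_\alpha^{\max}(f_\beta(\hat x))-f_\alpha^{\min}(f_\beta(\tilde x))}{f_\beta(\hat x)-f_\beta(\tilde x)}:\ (\hat x,\hat y),(\tilde x,\tilde y)\text{ feasible},\ f_\beta(\hat x)>f_\beta(\tilde x)\right\},$$ and let $\Omega^{=}$ be the same maximum taken only over feasible pairs with $f_\beta(\hat x)=f_\beta(\tilde x)+1$. Then $\Omega^{>}=\Omega^{=}$. Consequently, if $\alpha,\beta>0$ satisfy $\beta/\alpha>\Omega^{=}$, then for every pair of feasible solutions $(\hat x,\hat y)$, $(\tilde x,\tilde y)$ with $f_\beta(\hat x)>f_\beta(\tilde x)$ we have $f(\hat x,\hat y)<f(\tilde x,\tilde y)$.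
   Context: An RWA-P instance consists of: a directed graph $G=(V,E)$ (parallel arcs allowed), whose arcs are called links; a finite set $\Lambda$ of wavelengths; a finite set $R$ of requests, each request $r$ having a source node $s^r$ and a distinct destination node $t^r$; and for each $r\in R$ finite sets $W^r$ (working lightpaths) and $P^r$ (protection lightpaths). Each lightpath $\ell$ of request $r$ is a directed path in $G$ from $s^r$ to $t^r$ together with a wavelength $\Lambda[\ell]\in\Lambda$; $E[\ell]$ denotes its set of links and its length is $B^r_\ell=|E[\ell]|\ge 1$. Conflict sets: $\mathcal C_1=\{(r,w,p): r\in R, w\in W^r,p\in P^r, E[w]\cap E[p]\ne\emptyset\}$; $\mathcal C_2=\{(r_1,r_2,w,p): r_1\ne r_2, w\in W^{r_1}, p\in P^{r_2}, \Lambda[w]=\Lambda[p], E[w]\cap E[p]\neq\emptyset\}$; $\mathcal C_3=\{(r_1,r_2,w_1,w_2): w_1\in W^{r_1}, w_2\in W^{r_2}, (r_1,w_1)\ne(r_2,w_2), \Lambda[w_1]=\Lambda[w_2], E[w_1]\cap E[w_2]\ne\emptyset\}$; $\mathcal C_4=\{(r_1,r_2,p_1,p_2): p_1\in P^{r_1}, p_2\in P^{r_2}, (r_1,p_1)\ne(r_2,p_2), \Lambda[p_1]=\Lambda[p_2], E[p_1]\cap E[p_2]\ne\emptyset\}$. A solution is a pair of binary vectors $x=(x^r_w)_{r\in R,w\in W^r}$, $y=(y^r_p)_{r\in R,p\in P^r}$; it is feasible if $\sum_{w\in W^r}x^r_w=\sum_{p\in P^r}y^r_p$ and $\sum_{w\in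 W^r}x^r_w\le 1$ for all $r$, $x^r_w+y^r_p\le1$ for $(r,w,p)\in\mathcal C_1$, $x^{r_1}_w+y^{r_2}_p\le1$ for $(r_1,r_2,w,p)\in\mathcal C_2$, $x^{r_1}_{w_1}+x^{r_2}_{w_2}\le1$ for $\mathcal C_3$, $y^{r_1}_{p_1}+y^{r_2}_{p_2}\le 1$ for $\mathcal C_4$. Define link usage $f_\alpha(x,y)=\sum_{r}\big(\sum_{w\in W^r}B^r_wx^r_w+\sum_{p\in P^r}B^r_py^r_p\big)$, number of granted requests $f_\beta(x)=\sum_r\sum_{w\in W^r}x^r_w$, and objective $f(x,y)=\alpha f_\alpha(x,y)-\beta f_\beta(x)$. *)

theory Defs
  imports Main "HOL.Real"
begin

text \<open>Nodes of type 'v, links (arcs, parallel arcs allowed) of type 'e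
  with tail/head maps, wavelengths 'w, requests 'r, lightpaths 'p. A lightpath is given by
  the list of its links (a directed path) together with its wavelength.\<close>

record ('v, 'e, 'w, 'r, 'p) rwa =
  nodes :: "'v set"
  links :: "'e set"
  ltail :: "'e \<Rightarrow> 'v"
  lhead :: "'e \<Rightarrow> 'v"
  wls   :: "'w set"
  reqs  :: "'r set"
  src   :: "'r \<Rightarrow> 'v"
  dst   :: "'r \<Rightarrow> 'v"
  Wlp   :: "'r \<Rightarrow> 'p set"
  Plp   :: "'r \<Rightarrow> 'p set"
  arcs  :: "'p \<Rightarrow> 'e list"
  lam   :: "'p \<Rightarrow> 'w"

definition is_dpath :: "('v, 'e, 'w, 'r, 'p) rwa \<Rightarrow> 'v \<Rightarrow> 'v \<Rightarrow> 'e list \<Rightarrow> bool" where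
  "is_dpath I s t es \<longleftrightarrow>
     es \<noteq> [] \<and> set es \<subseteq> links I \<and>
     ltail I (hd es) = s \<and> lhead I (last es) = t \<and>
     (\<forall>i. Suc i < length es \<longrightarrow> lhead I (es ! i) = ltail I (es ! Suc i)) \<and>
     distinct (map (ltail I) es @ [lhead I (last es)])"

definition Elp :: "('v, 'e, 'w, 'r, 'p) rwa \<Rightarrow> 'p \<Rightarrow> 'e set" where
  "Elp I l = set (arcs I l)"

definition Blp :: "('v, 'e, 'w, 'r, 'p) rwa \<Rightarrow> 'p \<Rightarrow> nat" where
  "Blp I l = card (Elp I l)"

definition valid_instance :: "('v, 'e, 'w, 'r, 'p) rwa \<Rightarrow> bool" where
  "valid_instance I \<longleftrightarrow>
     finite (nodes I) \<and> finite (links I) \<and>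
     (\<forall>e\<in>links I. ltail I e \<in> nodes I \<and> lhead I e \<in> nodes I) \<and>
     finite (wls I) \<and> finite (reqs I) \<and>
     (\<forall>r\<in>reqs I. src I r \<in> nodes I \<and> dst I r \<in> nodes I \<and> src I r \<noteq> dst I r \<and>
        finite (Wlp I r) \<and> finite (Plp I r) \<and>
        (\<forall>l\<in>Wlp I r \<union> Plp I r. is_dpath I (src I r) (dst I r) (arcs I l) \<and> lam I l \<in> wls I))"

definition feasible :: "('v, 'e, 'w, 'r, 'p) rwa \<Rightarrow> ('r \<Rightarrow> 'p \<Rightarrow> nat) \<Rightarrow> ('r \<Rightarrow> 'p \<Rightarrow> nat) \<Rightarrow> bool" where
  "feasible I x y \<longleftrightarrow>
     (\<forall>r\<in>reqs I. (\<forall>w\<in>Wlp I r. x r w \<in> {0, 1}) \<and> (\<forall>p\<in>Plp I r. y r p \<in> {0, 1}) \<and>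
        (\<Sum>w\<in>Wlp I r. x r w) = (\<Sum>p\<in>Plp I r. y r p) \<and> (\<Sum>w\<in>Wlp I r. x r w) \<le> 1) \<and>
     (\<forall>r\<in>reqs I. \<forall>w\<in>Wlp I r. \<forall>p\<in>Plp I r.
        Elp I w \<inter> Elp I p \<noteq> {} \<longrightarrow> x r w + y r p \<le> 1) \<and>
     (\<forall>r1\<in>reqs I. \<forall>r2\<in>reqs I. \<forall>w\<in>Wlp I r1. \<forall>p\<in>Plp I r2.
        r1 \<noteq> r2 \<and> lam I w = lam I p \<and> Elp I w \<inter> Elp I p \<noteq> {} \<longrightarrow> x r1 w + y r2 p \<le> 1) \<and>
     (\<forall>r1\<in>reqs I. \<forall>r2\<in>reqs I. \<forall>w1\<in>Wlp I r1. \<forall>w2\<in>Wlp I r2.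
        (r1, w1) \<noteq> (r2, w2) \<and> lam I w1 = lam I w2 \<and> Elp I w1 \<inter> Elp I w2 \<noteq> {} \<longrightarrow>
        x r1 w1 + x r2 w2 \<le> 1) \<and>
     (\<forall>r1\<in>reqs I. \<forall>r2\<in>reqs I. \<forall>p1\<in>Plp I r1. \<forall>p2\<in>Plp I r2.
        (r1, p1) \<noteq> (r2, p2) \<and> lam I p1 = lam I p2 \<and> Elp I p1 \<inter> Elp I p2 \<noteq> {} \<longrightarrow>
        y r1 p1 + y r2 p2 \<le> 1)"

definition f_alpha :: "('v, 'e, 'w, 'r, 'p) rwa \<Rightarrow> ('r \<Rightarrow> 'p \<Rightarrow> nat) \<Rightarrow> ('r \<Rightarrow> 'p \<Rightarrow> nat) \<Rightarrow> real" where
  "f_alpha I x y = (\<Sum>r\<in>reqs I. (\<Sum>w\<in>Wlp I r. real (Blp I w) * real (x r w))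
                                 + (\<Sum>p\<in>Plp I r. real (Blp I p) * real (y r p)))"

definition f_beta :: "('v, 'e, 'w, 'r, 'p) rwa \<Rightarrow> ('r \<Rightarrow> 'p \<Rightarrow> nat) \<Rightarrow> int" where
  "f_beta I x = (\<Sum>r\<in>reqs I. \<Sum>w\<in>Wlp I r. int (x r w))"

definition f_obj :: "('v, 'e, 'w, 'r, 'p) rwa \<Rightarrow> real \<Rightarrow> real \<Rightarrow> ('r \<Rightarrow> 'p \<Rightarrow> nat) \<Rightarrow> ('r \<Rightarrow> 'p \<Rightarrow> nat) \<Rightarrow> real" where
  "f_obj I \<alpha> \<beta> x y = \<alpha> * f_alpha I x y - \<beta> * real_of_int (f_beta I x)"

definition fa_max :: "('v, 'e, 'w, 'r, 'p) rwa \<Rightarrow> int \<Rightarrow> real" where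
  "fa_max I k = Max {f_alpha I x y | x y. feasible I x y \<and> f_beta I x = k}"

definition fa_min :: "('v, 'e, 'w, 'r, 'p) rwa \<Rightarrow> int \<Rightarrow> real" where
  "fa_min I k = Min {f_alpha I x y | x y. feasible I x y \<and> f_beta I x = k}"

definition Omega_gt :: "('v, 'e, 'w, 'r, 'p) rwa \<Rightarrow> real" where
  "Omega_gt I = Max {(fa_max I (f_beta I x1) - fa_min I (f_beta I x2))
                       / real_of_int (f_beta I x1 - f_beta I x2) | x1 y1 x2 y2.
                     feasible I x1 y1 \<and> feasible I x2 y2 \<and> f_beta I x1 > f_beta I x2}"

definition Omega_eq :: "('v, 'e, 'w, 'r, 'p) rwa \<Rightarrow> real" where
  "Omega_eq I = Max {(fa_max I (f_beta I x1) - fa_min I (f_beta I x2))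
                       / real_of_int (f_beta I x1 - f_beta I x2) | x1 y1 x2 y2.
                     feasible I x1 y1 \<and> feasible I x2 y2 \<and> f_beta I x1 = f_beta I x2 + 1}"

end

theory Submission
  imports Defs
begin

text \<open>Removing requests from a feasible solution keeps it feasible, so the attainable numbers of
  granted requests form an interval \<open>{0..K}\<close>. Write \<open>M k\<close> and \<open>m k\<close> for the largest and smallest
  link usage with exactly \<open>k\<close> granted requests. For attainable \<open>k\<^sub>2 < k\<^sub>1\<close> the difference
  \<open>M k\<^sub>1 - m k\<^sub>2\<close> telescopes into the unit steps \<open>M (j + 1) - m j\<close>, \<open>k\<^sub>2 \<le> j < k\<^sub>1\<close>, since
  \<open>m j \<le> M j\<close> at the intermediate points; each unit step is at most \<open>\<Omega>\<^sup>=\<close>, so every ratio in the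
  definition of \<open>\<Omega>\<^sup>>\<close> is at most \<open>\<Omega>\<^sup>=\<close>. For the consequence,
  \<open>\<alpha> (f\<^sub>\<alpha>(x\<^sub>1, y\<^sub>1) - f\<^sub>\<alpha>(x\<^sub>2, y\<^sub>2)) \<le> \<alpha> (k\<^sub>1 - k\<^sub>2) \<Omega>\<^sup>= < \<beta> (k\<^sub>1 - k\<^sub>2)\<close>.\<close>

lemma feasible_requestD:
  assumes "feasible I x y" "r \<in> reqs I"
  shows "(\<forall>w\<in>Wlp I r. x r w \<in> {0, 1}) \<and> (\<forall>p\<in>Plp I r. y r p \<in> {0, 1}) \<and>
    (\<Sum>w\<in>Wlp I r. x r w) = (\<Sum>p\<in>Plp I r. y r p) \<and> (\<Sum>w\<in>Wlp I r. x r w) \<le> 1"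
  using conjunct1[OF assms(1)[unfolded feasible_def]] assms(2) by (rule bspec)

lemma feasible_mono:
  assumes feas: "feasible I x y"
    and le_x: "\<And>r p. x' r p \<le> x r p" and le_y: "\<And>r p. y' r p \<le> y r p"
    and balanced: "\<And>r. r \<in> reqs I \<Longrightarrow> (\<Sum>w\<in>Wlp I r. x' r w) = (\<Sum>p\<in>Plp I r. y' r p)"
  shows "feasible I x' y'"
proof -
  have binary: "u' \<in> {0, 1}" if "u \<in> {0, 1}" "u' \<le> u" for u u' :: nat
    using that by auto
  have sum_le: "(\<Sum>w\<in>Wlp I r. x' r w) \<le> (\<Sum>w\<in>Wlp I r. x r w)" for r
    by (intro sum_mono le_x)
  have pair_le: "u + v \<le> (1::nat)" if "u' + v' \<le> 1" "u \<le> u'" "v \<le> v'" for u v u' v'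
    using that by linarith
  show ?thesis
    using feas unfolding feasible_def
    by (intro conjI; (meson binary balanced sum_le le_x le_y le_trans pair_le))
qed

lemma feasible_drop_request:
  assumes "feasible I x y"
  shows "feasible I (x(r := \<lambda>_. 0)) (y(r := \<lambda>_. 0))"
proof (rule feasible_mono[OF assms])
  fix q assume "q \<in> reqs I"
  then show "(\<Sum>w\<in>Wlp I q. (x(r := \<lambda>_. 0)) q w) = (\<Sum>p\<in>Plp I q. (y(r := \<lambda>_. 0)) q p)"
    using feasible_requestD[OF assms] by simp
qed simp_all

lemma f_beta_drop_request:
  assumes "finite (reqs I)" "r \<in> reqs I"
  shows "f_beta I (x(r := \<lambda>_. 0)) = f_beta I x - (\<Sum>w\<in>Wlp I r. int (x r w))"
proof -
  have "f_beta I x' = (\<Sum>w\<in>Wlp I r. int (x' r w)) + (\<Sum>q\<in>reqs I - {r}. \<Sum>w\<in>Wlp I q. int (x' q w))"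
    for x'
    unfolding f_beta_def using assms by (rule sum.remove)
  then show ?thesis by simp
qed

definition achievable :: "('v, 'e, 'w, 'r, 'p) rwa \<Rightarrow> int \<Rightarrow> bool" where
  "achievable I k \<longleftrightarrow> (\<exists>x y. feasible I x y \<and> f_beta I x = k)"

lemma achievable_bounds:
  assumes "achievable I k"
  shows "0 \<le> k \<and> k \<le> int (card (reqs I))"
proof -
  obtain x y where feas: "feasible I x y" and k: "k = f_beta I x"
    using assms unfolding achievable_def by blast
  have "(\<Sum>r\<in>reqs I. \<Sum>w\<in>Wlp I r. x r w) \<le> (\<Sum>r\<in>reqs I. 1)"
    using feasible_requestD[OF feas] by (intro sum_mono) blast
  moreover have "k = int (\<Sum>r\<in>reqs I. \<Sum>w\<in>Wlp I r. x r w)"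
    unfolding k f_beta_def by simp
  ultimately show ?thesis
    by (metis of_nat_0_le_iff of_nat_le_iff card_eq_sum)
qed

lemma achievable_pred:
  assumes fin: "finite (reqs I)" and succ: "achievable I (k + 1)" and "0 \<le> k"
  shows "achievable I k"
proof -
  obtain x y where feas: "feasible I x y" and k: "f_beta I x = k + 1"
    using succ unfolding achievable_def by blast
  have "f_beta I x \<noteq> 0"
    using k \<open>0 \<le> k\<close> by simp
  then obtain r where r: "r \<in> reqs I" and granted: "(\<Sum>w\<in>Wlp I r. int (x r w)) \<noteq> 0"
    unfolding f_beta_def by (meson sum.neutral)
  have "(\<Sum>w\<in>Wlp I r. x r w) \<le> 1"
    using feasible_requestD[OF feas r] by blast
  with granted have "(\<Sum>w\<in>Wlp I r. int (x r w)) = 1"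
    by (simp flip: of_nat_sum)
  then have "f_beta I (x(r := \<lambda>_. 0)) = k"
    using f_beta_drop_request[OF fin r] k by simp
  with feasible_drop_request[OF feas] show ?thesis
    unfolding achievable_def by blast
qed

lemma achievable_downward_closed:
  assumes "finite (reqs I)" "achievable I k" "0 \<le> j" "j \<le> k"
  shows "achievable I j"
  using \<open>j \<le> k\<close> \<open>0 \<le> j\<close>
proof (induction j rule: int_le_induct)
  case base
  show ?case by (fact assms(2))
next
  case (step i)
  then show ?case using achievable_pred[OF assms(1), of "i - 1"] by simp
qed

lemma finite_f_alpha_values: "finite {f_alpha I x y | x y. feasible I x y}"
proof -
  define total where
    "total = (\<Sum>r\<in>reqs I. (\<Sum>w\<in>Wlp I r. Blp I w) + (\<Sum>p\<in>Plp I r. Blp I p))"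
  have "f_alpha I x y \<in> real ` {..total}" if feas: "feasible I x y" for x y
  proof -
    have usage: "f_alpha I x y =
      real (\<Sum>r\<in>reqs I. (\<Sum>w\<in>Wlp I r. Blp I w * x r w) + (\<Sum>p\<in>Plp I r. Blp I p * y r p))"
      unfolding f_alpha_def by simp
    have "(\<Sum>r\<in>reqs I. (\<Sum>w\<in>Wlp I r. Blp I w * x r w) + (\<Sum>p\<in>Plp I r. Blp I p * y r p))
      \<in> {..total}"
      unfolding total_def atMost_iff
      by (intro sum_mono add_mono) (auto simp: mult_le_cancel_left1 dest!: feasible_requestD[OF feas])
    then show ?thesis unfolding usage by (rule imageI)
  qed
  then have "{f_alpha I x y | x y. feasible I x y} \<subseteq> real ` {..total}"
    by blast
  then show ?thesis
    by (rule finite_subset) simp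
qed

lemma fa_min_le_f_alpha_le_fa_max:
  assumes "feasible I x y"
  shows "fa_min I (f_beta I x) \<le> f_alpha I x y \<and> f_alpha I x y \<le> fa_max I (f_beta I x)"
proof -
  let ?S = "{f_alpha I u v | u v. feasible I u v \<and> f_beta I u = f_beta I x}"
  have "finite ?S"
    by (rule finite_subset[OF _ finite_f_alpha_values]) blast
  moreover have "f_alpha I x y \<in> ?S"
    using assms by blast
  ultimately show ?thesis
    unfolding fa_min_def fa_max_def by simp
qed

lemma fa_min_le_fa_max: "achievable I k \<Longrightarrow> fa_min I k \<le> fa_max I k"
  unfolding achievable_def using fa_min_le_f_alpha_le_fa_max by fastforce

lemma telescoping_gap_bound:
  fixes M m :: "int \<Rightarrow> real"
  assumes "a < b"
    and unit_step: "\<And>j. a \<le> j \<Longrightarrow> j < b \<Longrightarrow> M (j + 1) - m j \<le> c"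
    and between: "\<And>j. a < j \<Longrightarrow> j < b \<Longrightarrow> m j \<le> M j"
  shows "M b - m a \<le> of_int (b - a) * c"
proof -
  have "M i - m a \<le> of_int (i - a) * c" if "a + 1 \<le> i" "i \<le> b" for i
    using that
  proof (induction i rule: int_ge_induct)
    case base
    then show ?case using unit_step[of a] by simp
  next
    case (step i)
    have "M (i + 1) - m a = (M (i + 1) - m i) + (m i - M i) + (M i - m a)"
      by simp
    also have "\<dots> \<le> c + 0 + of_int (i - a) * c"
      using step unit_step[of i] between[of i] by (intro add_mono) auto
    finally show ?case by (simp add: algebra_simps)
  qed
  then show ?thesis using \<open>a < b\<close> by simp
qed

definition gap_ratio :: "('v, 'e, 'w, 'r, 'p) rwa \<Rightarrow> int \<Rightarrow> int \<Rightarrow> real" where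
  "gap_ratio I k\<^sub>1 k\<^sub>2 = (fa_max I k\<^sub>1 - fa_min I k\<^sub>2) / real_of_int (k\<^sub>1 - k\<^sub>2)"

lemma Omega_gt_eq_Max_gap_ratio:
  "Omega_gt I = Max {gap_ratio I k\<^sub>1 k\<^sub>2 | k\<^sub>1 k\<^sub>2. achievable I k\<^sub>1 \<and> achievable I k\<^sub>2 \<and> k\<^sub>2 < k\<^sub>1}"
  unfolding Omega_gt_def gap_ratio_def achievable_def by (intro arg_cong[where f = Max]) blast

lemma Omega_eq_eq_Max_gap_ratio:
  "Omega_eq I = Max {gap_ratio I k\<^sub>1 k\<^sub>2 | k\<^sub>1 k\<^sub>2. achievable I k\<^sub>1 \<and> achievable I k\<^sub>2 \<and> k\<^sub>1 = k\<^sub>2 + 1}"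
  unfolding Omega_eq_def gap_ratio_def achievable_def by (intro arg_cong[where f = Max]) blast

lemma finite_gap_ratios:
  "finite {gap_ratio I k\<^sub>1 k\<^sub>2 | k\<^sub>1 k\<^sub>2. achievable I k\<^sub>1 \<and> achievable I k\<^sub>2 \<and> P k\<^sub>1 k\<^sub>2}"
proof -
  let ?K = "{0..int (card (reqs I))}"
  have "{gap_ratio I k\<^sub>1 k\<^sub>2 | k\<^sub>1 k\<^sub>2. achievable I k\<^sub>1 \<and> achievable I k\<^sub>2 \<and> P k\<^sub>1 k\<^sub>2}
    \<subseteq> case_prod (gap_ratio I) ` (?K \<times> ?K)"
    using achievable_bounds by fastforce
  then show ?thesis
    by (rule finite_subset) simp
qed

lemma fa_max_succ_sub_fa_min_le_Omega_eq:
  assumes "achievable I (j + 1)" "achievable I j"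
  shows "fa_max I (j + 1) - fa_min I j \<le> Omega_eq I"
proof -
  have "gap_ratio I (j + 1) j \<le> Omega_eq I"
    unfolding Omega_eq_eq_Max_gap_ratio using assms by (intro Max_ge finite_gap_ratios) blast
  then show ?thesis
    unfolding gap_ratio_def by simp
qed

lemma fa_max_sub_fa_min_le:
  assumes fin: "finite (reqs I)" and "achievable I k\<^sub>1" "0 \<le> k\<^sub>2" "k\<^sub>2 < k\<^sub>1"
  shows "fa_max I k\<^sub>1 - fa_min I k\<^sub>2 \<le> real_of_int (k\<^sub>1 - k\<^sub>2) * Omega_eq I"
proof (rule telescoping_gap_bound)
  have achievable_between: "achievable I j" if "k\<^sub>2 \<le> j" "j \<le> k\<^sub>1" for j
    using achievable_downward_closed[OF fin \<open>achievable I k\<^sub>1\<close>] that \<open>0 \<le> k\<^sub>2\<close> by simp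
  show "fa_max I (j + 1) - fa_min I j \<le> Omega_eq I" if "k\<^sub>2 \<le> j" "j < k\<^sub>1" for j
    using that by (intro fa_max_succ_sub_fa_min_le_Omega_eq achievable_between) auto
  show "fa_min I j \<le> fa_max I j" if "k\<^sub>2 < j" "j < k\<^sub>1" for j
    using that by (intro fa_min_le_fa_max achievable_between) auto
qed (fact \<open>k\<^sub>2 < k\<^sub>1\<close>)

lemma gap_ratio_le_Omega_eq:
  assumes fin: "finite (reqs I)" and "achievable I k\<^sub>1" "achievable I k\<^sub>2" "k\<^sub>2 < k\<^sub>1"
  shows "gap_ratio I k\<^sub>1 k\<^sub>2 \<le> Omega_eq I"
proof -
  have "fa_max I k\<^sub>1 - fa_min I k\<^sub>2 \<le> real_of_int (k\<^sub>1 - k\<^sub>2) * Omega_eq I"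
    using assms achievable_bounds by (intro fa_max_sub_fa_min_le) auto
  then show ?thesis
    unfolding gap_ratio_def using \<open>k\<^sub>2 < k\<^sub>1\<close> by (simp add: divide_le_eq mult.commute)
qed

lemma Omega_gt_eq_Omega_eq:
  assumes fin: "finite (reqs I)"
  shows "Omega_gt I = Omega_eq I"
proof -
  let ?G = "{gap_ratio I k\<^sub>1 k\<^sub>2 | k\<^sub>1 k\<^sub>2. achievable I k\<^sub>1 \<and> achievable I k\<^sub>2 \<and> k\<^sub>2 < k\<^sub>1}"
  let ?E = "{gap_ratio I k\<^sub>1 k\<^sub>2 | k\<^sub>1 k\<^sub>2. achievable I k\<^sub>1 \<and> achievable I k\<^sub>2 \<and> k\<^sub>1 = k\<^sub>2 + 1}"
  have E_sub_G: "?E \<subseteq> ?G"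
    using less_add_one by blast
  show ?thesis
  proof (cases "?G = {}")
    case True
    moreover have "?E = {}"
      using True E_sub_G by blast
    ultimately show ?thesis
      unfolding Omega_gt_eq_Max_gap_ratio Omega_eq_eq_Max_gap_ratio by (simp only:)
  next
    case False
    then obtain k\<^sub>1 k\<^sub>2 where "achievable I k\<^sub>1" "achievable I k\<^sub>2" "k\<^sub>2 < k\<^sub>1"
      by blast
    moreover have "achievable I (k\<^sub>2 + 1)"
      using achievable_downward_closed[OF fin \<open>achievable I k\<^sub>1\<close>]
        achievable_bounds[OF \<open>achievable I k\<^sub>2\<close>] \<open>k\<^sub>2 < k\<^sub>1\<close> by simp
    ultimately have "?E \<noteq> {}"
      by blast
    then have "Omega_eq I \<in> ?G"
      unfolding Omega_eq_eq_Max_gap_ratio by (intro subsetD[OF E_sub_G] Max_in finite_gap_ratios)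
    moreover have "z \<le> Omega_eq I" if "z \<in> ?G" for z
      using that by (auto intro: gap_ratio_le_Omega_eq[OF fin])
    ultimately show ?thesis
      unfolding Omega_gt_eq_Max_gap_ratio by (intro Max_eqI finite_gap_ratios)
  qed
qed

lemma f_obj_less_if_f_beta_less:
  assumes fin: "finite (reqs I)" and "\<alpha> > 0" and threshold: "Omega_eq I < \<beta> / \<alpha>"
    and feas: "feasible I x\<^sub>1 y\<^sub>1" "feasible I x\<^sub>2 y\<^sub>2" and less: "f_beta I x\<^sub>2 < f_beta I x\<^sub>1"
  shows "f_obj I \<alpha> \<beta> x\<^sub>1 y\<^sub>1 < f_obj I \<alpha> \<beta> x\<^sub>2 y\<^sub>2"
proof -
  define d where "d = real_of_int (f_beta I x\<^sub>1 - f_beta I x\<^sub>2)"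
  have "d > 0"
    unfolding d_def using less by simp
  have "f_alpha I x\<^sub>1 y\<^sub>1 - f_alpha I x\<^sub>2 y\<^sub>2 \<le> fa_max I (f_beta I x\<^sub>1) - fa_min I (f_beta I x\<^sub>2)"
    using fa_min_le_f_alpha_le_fa_max[OF feas(1)] fa_min_le_f_alpha_le_fa_max[OF feas(2)] by linarith
  also have "\<dots> \<le> d * Omega_eq I"
    unfolding d_def using feas less achievable_bounds
    by (intro fa_max_sub_fa_min_le[OF fin]) (auto simp: achievable_def)
  finally have "\<alpha> * (f_alpha I x\<^sub>1 y\<^sub>1 - f_alpha I x\<^sub>2 y\<^sub>2) \<le> \<alpha> * (d * Omega_eq I)"
    using \<open>\<alpha> > 0\<close> by simp
  also have "\<dots> < \<beta> * d"
    using threshold \<open>\<alpha> > 0\<close> \<open>d > 0\<close> by (simp add: less_divide_eq mult.commute)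
  finally show ?thesis
    unfolding f_obj_def d_def by (simp add: algebra_simps)
qed

theorem proposition1:
  fixes I :: "('v, 'e, 'w, 'r, 'p) rwa" and \<alpha> \<beta> :: real
  assumes "valid_instance I" and "\<alpha> > 0" and "\<beta> > 0"
  shows "Omega_gt I = Omega_eq I \<and>
         (\<beta> / \<alpha> > Omega_eq I \<longrightarrow>
            (\<forall>x1 y1 x2 y2. feasible I x1 y1 \<longrightarrow> feasible I x2 y2 \<longrightarrow>
               f_beta I x1 > f_beta I x2 \<longrightarrow> f_obj I \<alpha> \<beta> x1 y1 < f_obj I \<alpha> \<beta> x2 y2))"
proof -
  have fin: "finite (reqs I)"
    using \<open>valid_instance I\<close> unfolding valid_instance_def by blast
  show ?thesis
    using Omega_gt_eq_Omega_eq[OF fin] f_obj_less_if_f_beta_less[OF fin \<open>\<alpha> > 0\<close>] by blast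
qed

end
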